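(* Let $G\in\mathcal{WR}_b(A,B\curvearrowright I)$ with quotient map $\varepsilon\colon G\to B$, section $\varsigma$ and cocycle $\alpha$, and let $C>0$ with $|\mathrm{supp}(\alpha(x,y))|\le C$ for all $x,y\in B$. Let $\pi\colon B\to\mathcal O(\ell^2(I))$ be the orthogonal (permutation) representation induced by $B\curvearrowright I$. Then there is a map $\mathfrak q\colon G\to\ell^2(I)$ such that (1) for all $x,y\in G$, $\sup_{z\in G}\|\mathfrak q(xzy)-\pi_{\varepsilon(x)}(\mathfrak q(z))\|_2<\infty$; and (2) for all $x\in A^{(I)}$, $\|\mathfrak q(x)\|_2^2=|\mathrm{supp}(x)|$.
   Context: $G\in\mathcal{WR}(A,B\curvearrowright I)$ means there is a short exact sequence $1\to A^{(I)}:=\bigoplus_{i\in I}A_i\to G\xrightarrow{\varepsilon}B\to1$ with $A_i\cong A$ and $gA_ig^{-1}=A_{\varepsilon(g)i}$ for all $g\in G,i\in I$. $G\in\mathcal{WR}_b(A,B\curvearrowright I)$ means moreover there is a map $\varsigma\colon B\to G$ with $\varepsilon\circ\varsigma=\mathrm{id}_B$ such that the cocycle $\alpha(x,y)=\varsigma(x)\varsigma(y)\varsigma(xy)^{-1}\in A^{(I)}$ has uniformly bounded support. For $c\in A^{(I)}$, $\mathrm{supp}(c)=\{i\in I: c(i)\neq1\}$. $\ell^2(I)$ is the real Hilbert space of square-summable real functions on $I$. *)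

theory Defs
  imports "HOL-Analysis.Analysis" "HOL-Algebra.Product_Groups" "HOL-Algebra.Group_Action"
begin

text \<open>The restricted direct sum A^(I) = (finitely supported functions I -> A), as a group.\<close>
abbreviation dsum :: "'i set \<Rightarrow> ('a, 'c) monoid_scheme \<Rightarrow> ('i \<Rightarrow> 'a) monoid" where
  "dsum I A \<equiv> sum_group I (\<lambda>_. A)"

definition supp_ds :: "'i set \<Rightarrow> ('a, 'c) monoid_scheme \<Rightarrow> ('i \<Rightarrow> 'a) \<Rightarrow> 'i set" where
  "supp_ds I A c = {i \<in> I. c i \<noteq> \<one>\<^bsub>A\<^esub>}"

definition factor_ds :: "'i set \<Rightarrow> ('a, 'c) monoid_scheme \<Rightarrow> 'i \<Rightarrow> ('i \<Rightarrow> 'a) set" where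
  "factor_ds I A i = {c \<in> carrier (dsum I A). \<forall>j\<in>I. j \<noteq> i \<longrightarrow> c j = \<one>\<^bsub>A\<^esub>}"

text \<open>G \<in> WR(A, B acting on I): G is an extension of B by A^(I) (embedded via iota),
  the quotient map is eps, B acts on I via phi, and conjugation permutes the factors.\<close>
definition WR ::
  "('g, 'gc) monoid_scheme \<Rightarrow> ('a, 'ac) monoid_scheme \<Rightarrow> ('b, 'bc) monoid_scheme \<Rightarrow> 'i set
   \<Rightarrow> ('b \<Rightarrow> 'i \<Rightarrow> 'i) \<Rightarrow> (('i \<Rightarrow> 'a) \<Rightarrow> 'g) \<Rightarrow> ('g \<Rightarrow> 'b) \<Rightarrow> bool" where
  "WR G A B I phi iota eps \<longleftrightarrow>
     group G \<and> group A \<and> group B \<and> group_action B I phi \<and>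
     iota \<in> hom (dsum I A) G \<and> inj_on iota (carrier (dsum I A)) \<and>
     eps \<in> hom G B \<and> eps ` carrier G = carrier B \<and>
     iota ` carrier (dsum I A) = kernel G B eps \<and>
     (\<forall>g\<in>carrier G. \<forall>i\<in>I.
        (\<lambda>h. g \<otimes>\<^bsub>G\<^esub> h \<otimes>\<^bsub>G\<^esub> inv\<^bsub>G\<^esub> g) ` (iota ` factor_ds I A i)
          = iota ` factor_ds I A (phi (eps g) i))"

definition cocycle ::
  "('g, 'gc) monoid_scheme \<Rightarrow> ('b, 'bc) monoid_scheme \<Rightarrow> ('b \<Rightarrow> 'g) \<Rightarrow> 'b \<Rightarrow> 'b \<Rightarrow> 'g" where
  "cocycle G B sig x y = sig x \<otimes>\<^bsub>G\<^esub> sig y \<otimes>\<^bsub>G\<^esub> inv\<^bsub>G\<^esub> (sig (x \<otimes>\<^bsub>B\<^esub> y))"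

definition l2 :: "'i set \<Rightarrow> ('i \<Rightarrow> real) set" where
  "l2 I = {f. (\<forall>i. i \<notin> I \<longrightarrow> f i = 0) \<and> (\<lambda>i. (f i)\<^sup>2) summable_on I}"

definition l2norm :: "'i set \<Rightarrow> ('i \<Rightarrow> real) \<Rightarrow> real" where
  "l2norm I f = sqrt (infsum (\<lambda>i. (f i)\<^sup>2) I)"

text \<open>Permutation representation: (pi_b f)(i) = f(b^{-1} i), so pi_b delta_j = delta_{b j}.\<close>
definition perm_rep ::
  "('b, 'bc) monoid_scheme \<Rightarrow> 'i set \<Rightarrow> ('b \<Rightarrow> 'i \<Rightarrow> 'i) \<Rightarrow> 'b \<Rightarrow> ('i \<Rightarrow> real) \<Rightarrow> ('i \<Rightarrow> real)" where
  "perm_rep B I phi b f = (\<lambda>i. if i \<in> I then f (phi (inv\<^bsub>B\<^esub> b) i) else 0)"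

end

theory Submission
  imports Defs
begin

text \<open>Normalize the section so that \<open>tau 1 = 1\<close> and write every \<open>g \<in> G\<close> as
  \<open>iota (coord g) \<otimes> tau (eps g)\<close> with \<open>coord g \<in> A^(I)\<close>; take \<open>q g\<close> to be the indicator function
  of \<open>supp (coord g)\<close>. On the kernel \<open>coord\<close> is the identity, which gives (2). Conjugation by \<open>x\<close>
  maps each factor \<open>A_i\<close> onto \<open>A_(eps x i)\<close>, so it moves supports by \<open>eps x\<close> without changing their
  size, and \<open>coord\<close> is a crossed homomorphism up to the cocycle:
  \<open>coord (x z) = (x coord(z) x\<inverse>) \<cdot> coord(x) \<cdot> alpha(eps x, eps z)\<close>.
  Applying this twice, \<open>supp (coord (x z y))\<close> differs from \<open>eps x \<cdot> supp (coord z)\<close> in at most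
  \<open>|supp coord x| + |supp coord y| + 2 sup |supp alpha|\<close> points, and the \<open>l\<^sup>2\<close>-distance of two
  indicator functions is the square root of the size of their symmetric difference, which gives (1).\<close>

section \<open>Indicator functions in \<open>l\<^sup>2\<close>\<close>

lemma l2norm_eq_sqrt_card:
  fixes f :: "'i \<Rightarrow> real"
  assumes "finite U" "U \<subseteq> I" "\<And>i. (f i)\<^sup>2 = indicator U i"
  shows "(\<lambda>i. (f i)\<^sup>2) summable_on I" and "l2norm I f = sqrt (real (card U))"
proof -
  have "(\<lambda>i. (f i)\<^sup>2) summable_on I \<longleftrightarrow> (\<lambda>i. (f i)\<^sup>2) summable_on U"
    by (rule summable_on_cong_neutral) (use assms in auto)
  then show "(\<lambda>i. (f i)\<^sup>2) summable_on I"
    using assms(1) by simp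
  have "infsum (\<lambda>i. (f i)\<^sup>2) I = infsum (\<lambda>i. (f i)\<^sup>2) U"
    by (rule infsum_cong_neutral) (use assms in auto)
  also have "\<dots> = real (card U)"
    using assms by simp
  finally show "l2norm I f = sqrt (real (card U))"
    unfolding l2norm_def by simp
qed

lemma indicator_in_l2:
  assumes "finite S" "S \<subseteq> I"
  shows "(indicator S :: 'i \<Rightarrow> real) \<in> l2 I"
proof -
  have "(\<lambda>i. (indicator S i :: real)\<^sup>2) summable_on I"
    by (rule l2norm_eq_sqrt_card(1)[OF assms]) (simp add: indicator_def)
  then show ?thesis
    using assms(2) unfolding l2_def by (auto simp: indicator_def)
qed

lemma l2norm_indicator:
  assumes "finite S" "S \<subseteq> I"
  shows "l2norm I (indicator S :: 'i \<Rightarrow> real) = sqrt (real (card S))"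
  by (rule l2norm_eq_sqrt_card(2)[OF assms]) (simp add: indicator_def)

lemma l2norm_indicator_diff:
  assumes "finite S" "finite T" "S \<subseteq> I" "T \<subseteq> I"
  shows "l2norm I (\<lambda>i. indicator S i - indicator T i :: real) = sqrt (real (card (sym_diff S T)))"
  by (rule l2norm_eq_sqrt_card(2)) (use assms in \<open>auto simp: indicator_def\<close>)

lemma (in group_action) perm_rep_indicator:
  assumes g: "g \<in> carrier G" and S: "S \<subseteq> E"
  shows "perm_rep G E \<phi> g (indicator S) = (indicator (\<phi> g ` S) :: _ \<Rightarrow> real)"
proof -
  interpret group G
    using group_hom group_hom.axioms(1) by blast
  have preimage: "\<phi> (inv g) x \<in> S \<longleftrightarrow> x \<in> \<phi> g ` S" if x: "x \<in> E" for x
  proof -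
    have cancel_left: "\<phi> g (\<phi> (inv g) x) = x"
      using composition_rule[OF x g inv_closed[OF g]] g x by (simp flip: id_eq_one)
    have cancel_right: "\<phi> (inv g) (\<phi> g s) = s" if "s \<in> E" for s
      using composition_rule[OF that inv_closed[OF g] g] g that by (simp flip: id_eq_one)
    show ?thesis
    proof
      assume "\<phi> (inv g) x \<in> S"
      then show "x \<in> \<phi> g ` S"
        using cancel_left by (metis image_eqI)
    next
      assume "x \<in> \<phi> g ` S"
      then obtain s where "s \<in> S" "x = \<phi> g s" by blast
      then show "\<phi> (inv g) x \<in> S"
        using cancel_right S by auto
    qed
  qed
  have "\<phi> g ` S \<subseteq> E"
    using S surj_prop[OF g] by blast
  then show ?thesis
    unfolding perm_rep_def using preimage by (force simp: indicator_def)
qed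

section \<open>Supports in the restricted direct sum\<close>

lemma card_sym_diff_triangle:
  assumes "finite A" "finite B" "finite C"
  shows "card (sym_diff A C) \<le> card (sym_diff A B) + card (sym_diff B C)"
proof -
  have "card (sym_diff A C) \<le> card (sym_diff A B \<union> sym_diff B C)"
    by (rule card_mono) (use assms in auto)
  also have "\<dots> \<le> card (sym_diff A B) + card (sym_diff B C)"
    by (rule card_Un_le)
  finally show ?thesis .
qed

lemma supp_ds_subset: "supp_ds I A c \<subseteq> I"
  unfolding supp_ds_def by auto

context group
begin

lemma carrier_dsum:
  "carrier (dsum I G) = {x \<in> (\<Pi>\<^sub>E i\<in>I. carrier G). finite {i \<in> I. x i \<noteq> \<one>}}"
  by (rule carrier_sum_group) (rule is_group)

lemma finite_supp_ds: "c \<in> carrier (dsum I G) \<Longrightarrow> finite (supp_ds I G c)"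
  unfolding carrier_dsum supp_ds_def by auto

lemma supp_ds_eq_empty_iff:
  "c \<in> carrier (dsum I G) \<Longrightarrow> supp_ds I G c = {} \<longleftrightarrow> c = \<one>\<^bsub>dsum I G\<^esub>"
  unfolding carrier_dsum supp_ds_def by (auto simp: PiE_iff extensional_def)

lemma supp_ds_mult_subset: "supp_ds I G (a \<otimes>\<^bsub>dsum I G\<^esub> b) \<subseteq> supp_ds I G a \<union> supp_ds I G b"
  unfolding supp_ds_def by auto

lemma card_supp_ds_mult:
  assumes "a \<in> carrier (dsum I G)" "b \<in> carrier (dsum I G)"
  shows "card (supp_ds I G (a \<otimes>\<^bsub>dsum I G\<^esub> b)) \<le> card (supp_ds I G a) + card (supp_ds I G b)"
proof -
  have "card (supp_ds I G (a \<otimes>\<^bsub>dsum I G\<^esub> b)) \<le> card (supp_ds I G a \<union> supp_ds I G b)"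
    using assms by (intro card_mono supp_ds_mult_subset) (auto intro: finite_supp_ds)
  also have "\<dots> \<le> card (supp_ds I G a) + card (supp_ds I G b)"
    by (rule card_Un_le)
  finally show ?thesis .
qed

lemma supp_ds_mult_disjoint:
  assumes "a \<in> carrier (dsum I G)" "b \<in> carrier (dsum I G)" "supp_ds I G a \<inter> supp_ds I G b = {}"
  shows "supp_ds I G (a \<otimes>\<^bsub>dsum I G\<^esub> b) = supp_ds I G a \<union> supp_ds I G b"
  using assms unfolding carrier_dsum supp_ds_def by (auto simp: PiE_iff)

lemma sym_diff_supp_ds_mult_left:
  assumes "a \<in> carrier (dsum I G)" "b \<in> carrier (dsum I G)"
  shows "sym_diff (supp_ds I G (a \<otimes>\<^bsub>dsum I G\<^esub> b)) (supp_ds I G a) \<subseteq> supp_ds I G b"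
  using assms unfolding carrier_dsum supp_ds_def by (auto simp: PiE_iff)

lemma sym_diff_supp_ds_mult_middle:
  assumes "a \<in> carrier (dsum I G)" "b \<in> carrier (dsum I G)" "c \<in> carrier (dsum I G)"
  shows "sym_diff (supp_ds I G (a \<otimes>\<^bsub>dsum I G\<^esub> b \<otimes>\<^bsub>dsum I G\<^esub> c)) (supp_ds I G b)
           \<subseteq> supp_ds I G a \<union> supp_ds I G c"
  using assms unfolding carrier_dsum supp_ds_def by (auto simp: PiE_iff)

lemma dsum_split_off:
  assumes c: "c \<in> carrier (dsum I G)" and i: "i \<in> supp_ds I G c"
  obtains a r where "a \<in> carrier (dsum I G)" "supp_ds I G a = {i}"
    "r \<in> carrier (dsum I G)" "supp_ds I G r = supp_ds I G c - {i}" "c = a \<otimes>\<^bsub>dsum I G\<^esub> r"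
proof
  define a where "a = (\<lambda>j\<in>I. if j = i then c i else \<one>)"
  define r where "r = (\<lambda>j\<in>I. if j = i then \<one> else c j)"
  have cI: "c \<in> (\<Pi>\<^sub>E j\<in>I. carrier G)" and fin: "finite (supp_ds I G c)"
    using c finite_supp_ds unfolding carrier_dsum by auto
  have iI: "i \<in> I" and ci: "c i \<noteq> \<one>"
    using i unfolding supp_ds_def by auto
  show "supp_ds I G a = {i}" and "supp_ds I G r = supp_ds I G c - {i}"
    using iI ci unfolding a_def r_def supp_ds_def by auto
  then show "a \<in> carrier (dsum I G)" "r \<in> carrier (dsum I G)"
    using cI fin unfolding carrier_dsum supp_ds_def a_def r_def by (auto simp: PiE_iff)
  show "c = a \<otimes>\<^bsub>dsum I G\<^esub> r"
  proof
    fix j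
    show "c j = (a \<otimes>\<^bsub>dsum I G\<^esub> r) j"
      using cI by (cases "j \<in> I") (auto simp: a_def r_def PiE_iff extensional_def)
  qed
qed

end

section \<open>Conjugation in extensions of wreath type\<close>

lemma (in group) conj_mult:
  assumes "g \<in> carrier G" "a \<in> carrier G" "b \<in> carrier G"
  shows "g \<otimes> (a \<otimes> b) \<otimes> inv g = (g \<otimes> a \<otimes> inv g) \<otimes> (g \<otimes> b \<otimes> inv g)"
  using assms by (simp add: m_assoc flip: m_assoc[of "inv g" g])

lemma (in group) conj_eq_one_iff:
  assumes "g \<in> carrier G" "h \<in> carrier G"
  shows "g \<otimes> h \<otimes> inv g = \<one> \<longleftrightarrow> h = \<one>"
  using assms by (simp add: inv_solve_right')

locale wr_extension =
  fixes G :: "('g, 'gc) monoid_scheme" and A :: "('a, 'ac) monoid_scheme"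
    and B :: "('b, 'bc) monoid_scheme" and I :: "'i set"
    and phi :: "'b \<Rightarrow> 'i \<Rightarrow> 'i" and iota :: "('i \<Rightarrow> 'a) \<Rightarrow> 'g" and eps :: "'g \<Rightarrow> 'b"
  assumes WR: "WR G A B I phi iota eps"
begin

lemma
  shows group_G: "group G"
    and group_A: "group A"
    and group_B: "group B"
    and action: "group_action B I phi"
    and iota_hom: "group_hom (dsum I A) G iota"
    and eps_hom: "group_hom G B eps"
    and inj_iota: "inj_on iota (carrier (dsum I A))"
    and image_iota: "iota ` carrier (dsum I A) = kernel G B eps"
    and conj_factor: "\<And>g i. g \<in> carrier G \<Longrightarrow> i \<in> I \<Longrightarrow>
          (\<lambda>h. g \<otimes>\<^bsub>G\<^esub> h \<otimes>\<^bsub>G\<^esub> inv\<^bsub>G\<^esub> g) ` iota ` factor_ds I A i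
            = iota ` factor_ds I A (phi (eps g) i)"
  using WR unfolding WR_def group_hom_def group_hom_axioms_def by auto

sublocale G: group G by (rule group_G)
sublocale A: group A by (rule group_A)
sublocale B: group B by (rule group_B)
sublocale action: group_action B I phi by (rule action)
sublocale iota: group_hom "dsum I A" G iota by (rule iota_hom)
sublocale eps: group_hom G B eps by (rule eps_hom)

lemma iota_eq_one_iff: "c \<in> carrier (dsum I A) \<Longrightarrow> iota c = \<one>\<^bsub>G\<^esub> \<longleftrightarrow> c = \<one>\<^bsub>dsum I A\<^esub>"
  using inj_onD[OF inj_iota] by (metis iota.G.one_closed iota.hom_one)

lemma conj_iota_singleton:
  assumes g: "g \<in> carrier G" and c: "c \<in> carrier (dsum I A)" and supp: "supp_ds I A c = {i}"
  obtains d where "d \<in> carrier (dsum I A)" "g \<otimes>\<^bsub>G\<^esub> iota c \<otimes>\<^bsub>G\<^esub> inv\<^bsub>G\<^esub> g = iota d"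
    "supp_ds I A d = {phi (eps g) i}"
proof -
  have iI: "i \<in> I"
    using supp_ds_subset[of I A c] supp by simp
  have "\<forall>j\<in>I. j \<noteq> i \<longrightarrow> c j = \<one>\<^bsub>A\<^esub>"
    using supp unfolding supp_ds_def by blast
  then have "c \<in> factor_ds I A i"
    using c unfolding factor_ds_def by blast
  then have "(\<lambda>h. g \<otimes>\<^bsub>G\<^esub> h \<otimes>\<^bsub>G\<^esub> inv\<^bsub>G\<^esub> g) (iota c) \<in> iota ` factor_ds I A (phi (eps g) i)"
    unfolding conj_factor[OF g iI, symmetric] by (intro imageI)
  then obtain d where d: "d \<in> factor_ds I A (phi (eps g) i)"
    and conj: "g \<otimes>\<^bsub>G\<^esub> iota c \<otimes>\<^bsub>G\<^esub> inv\<^bsub>G\<^esub> g = iota d"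
    by auto
  have dD: "d \<in> carrier (dsum I A)"
    using d unfolding factor_ds_def by blast
  have "supp_ds I A d \<noteq> {}"
  proof
    assume "supp_ds I A d = {}"
    then have "g \<otimes>\<^bsub>G\<^esub> iota c \<otimes>\<^bsub>G\<^esub> inv\<^bsub>G\<^esub> g = \<one>\<^bsub>G\<^esub>"
      unfolding conj using dD A.supp_ds_eq_empty_iff iota_eq_one_iff by blast
    then have "c = \<one>\<^bsub>dsum I A\<^esub>"
      using g c G.conj_eq_one_iff iota_eq_one_iff by simp
    then show False
      using A.supp_ds_eq_empty_iff[OF c] supp by simp
  qed
  moreover have "supp_ds I A d \<subseteq> {phi (eps g) i}"
    using d unfolding factor_ds_def supp_ds_def by blast
  ultimately show thesis
    using that dD conj by blast
qed

lemma conj_iota_supp: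
  assumes g: "g \<in> carrier G" and c: "c \<in> carrier (dsum I A)"
  obtains c' where "c' \<in> carrier (dsum I A)" "g \<otimes>\<^bsub>G\<^esub> iota c \<otimes>\<^bsub>G\<^esub> inv\<^bsub>G\<^esub> g = iota c'"
    "supp_ds I A c' = phi (eps g) ` supp_ds I A c"
proof -
  have "\<exists>c'\<in>carrier (dsum I A). g \<otimes>\<^bsub>G\<^esub> iota c \<otimes>\<^bsub>G\<^esub> inv\<^bsub>G\<^esub> g = iota c'
          \<and> supp_ds I A c' = phi (eps g) ` supp_ds I A c"
    if "finite S" "supp_ds I A c = S" "c \<in> carrier (dsum I A)" for S c
    using that
  proof (induction S arbitrary: c rule: finite_induct)
    case empty
    then have "c = \<one>\<^bsub>dsum I A\<^esub>"
      using A.supp_ds_eq_empty_iff[OF empty.prems(2)] empty.prems(1) by simp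
    moreover have "supp_ds I A \<one>\<^bsub>dsum I A\<^esub> = {}"
      using A.supp_ds_eq_empty_iff[OF iota.G.one_closed] by simp
    ultimately show ?case
      using g empty.prems(1) iota.G.one_closed
      by (intro bexI[of _ "\<one>\<^bsub>dsum I A\<^esub>"]) (simp_all del: one_sum_group)
  next
    case (insert i S)
    have "insert i S \<subseteq> I"
      using supp_ds_subset[of I A c] unfolding insert.prems(1) .
    then have iS: "i \<in> I" "S \<subseteq> I"
      by simp_all
    have i: "i \<in> supp_ds I A c"
      using insert.prems(1) by simp
    obtain a r where a: "a \<in> carrier (dsum I A)" "supp_ds I A a = {i}"
      and r: "r \<in> carrier (dsum I A)" "supp_ds I A r = supp_ds I A c - {i}"
      and split: "c = a \<otimes>\<^bsub>dsum I A\<^esub> r"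
      by (rule A.dsum_split_off[OF insert.prems(2) i])
    have suppr: "supp_ds I A r = S"
      using r(2) insert.prems(1) insert.hyps(2) by simp
    obtain a' where a': "a' \<in> carrier (dsum I A)" "g \<otimes>\<^bsub>G\<^esub> iota a \<otimes>\<^bsub>G\<^esub> inv\<^bsub>G\<^esub> g = iota a'"
      "supp_ds I A a' = {phi (eps g) i}"
      using conj_iota_singleton[OF g a] .
    from insert.IH[OF suppr r(1)] obtain r' where "r' \<in> carrier (dsum I A)"
      and "g \<otimes>\<^bsub>G\<^esub> iota r \<otimes>\<^bsub>G\<^esub> inv\<^bsub>G\<^esub> g = iota r' \<and> supp_ds I A r' = phi (eps g) ` supp_ds I A r" ..
    then have r': "r' \<in> carrier (dsum I A)" "g \<otimes>\<^bsub>G\<^esub> iota r \<otimes>\<^bsub>G\<^esub> inv\<^bsub>G\<^esub> g = iota r'"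
      "supp_ds I A r' = phi (eps g) ` S"
      unfolding suppr by simp_all
    have "inj_on (phi (eps g)) I"
      using g by (intro action.inj_prop) simp
    then have "phi (eps g) i \<notin> phi (eps g) ` S"
      using inj_on_image_mem_iff[OF _ iS(1) iS(2)] insert.hyps(2) by blast
    then have supp: "supp_ds I A (a' \<otimes>\<^bsub>dsum I A\<^esub> r') = phi (eps g) ` insert i S"
      using A.supp_ds_mult_disjoint[OF a'(1) r'(1)] a'(3) r'(3) by simp
    have conj: "g \<otimes>\<^bsub>G\<^esub> iota c \<otimes>\<^bsub>G\<^esub> inv\<^bsub>G\<^esub> g = iota (a' \<otimes>\<^bsub>dsum I A\<^esub> r')"
      using g a r a' r' unfolding split
      by (simp add: iota.hom_mult G.conj_mult del: mult_sum_group)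
    show ?case
      using iota.G.m_closed[OF a'(1) r'(1)] conj supp insert.prems(1) by blast
  qed
  from this[OF A.finite_supp_ds[OF c] refl c] obtain c' where "c' \<in> carrier (dsum I A)"
    and "g \<otimes>\<^bsub>G\<^esub> iota c \<otimes>\<^bsub>G\<^esub> inv\<^bsub>G\<^esub> g = iota c' \<and> supp_ds I A c' = phi (eps g) ` supp_ds I A c" ..
  then show thesis
    using that by simp
qed

lemma card_phi_image: "b \<in> carrier B \<Longrightarrow> S \<subseteq> I \<Longrightarrow> card (phi b ` S) = card S"
  using card_image inj_on_subset action.inj_prop by metis

end

section \<open>Coordinates with respect to a normalized section\<close>

locale wr_normalized_section = wr_extension G A B I phi iota eps
  for G :: "('g, 'gc) monoid_scheme" and A :: "('a, 'ac) monoid_scheme"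
    and B :: "('b, 'bc) monoid_scheme" and I :: "'i set"
    and phi :: "'b \<Rightarrow> 'i \<Rightarrow> 'i" and iota :: "('i \<Rightarrow> 'a) \<Rightarrow> 'g" and eps :: "'g \<Rightarrow> 'b" +
  fixes tau :: "'b \<Rightarrow> 'g" and K :: real
  assumes tau_carrier: "tau \<in> carrier B \<rightarrow> carrier G"
    and tau_section: "\<And>b. b \<in> carrier B \<Longrightarrow> eps (tau b) = b"
    and tau_one: "tau \<one>\<^bsub>B\<^esub> = \<one>\<^bsub>G\<^esub>"
    and cocycle_bounded: "\<And>a b. a \<in> carrier B \<Longrightarrow> b \<in> carrier B \<Longrightarrow>
          \<exists>c\<in>carrier (dsum I A). iota c = cocycle G B tau a b \<and> real (card (supp_ds I A c)) \<le> K"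
begin

definition coord :: "'g \<Rightarrow> 'i \<Rightarrow> 'a" where
  "coord g = the_inv_into (carrier (dsum I A)) iota (g \<otimes>\<^bsub>G\<^esub> inv\<^bsub>G\<^esub> tau (eps g))"

lemma tau_closed: "b \<in> carrier B \<Longrightarrow> tau b \<in> carrier G"
  using tau_carrier by blast

lemma coord_eqI:
  assumes "c \<in> carrier (dsum I A)" "iota c = g \<otimes>\<^bsub>G\<^esub> inv\<^bsub>G\<^esub> tau (eps g)"
  shows "coord g = c"
  unfolding coord_def assms(2)[symmetric] using the_inv_into_f_f[OF inj_iota assms(1)] .

lemma
  assumes g: "g \<in> carrier G"
  shows coord_closed: "coord g \<in> carrier (dsum I A)"
    and iota_coord: "iota (coord g) = g \<otimes>\<^bsub>G\<^esub> inv\<^bsub>G\<^esub> tau (eps g)"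
proof -
  have "g \<otimes>\<^bsub>G\<^esub> inv\<^bsub>G\<^esub> tau (eps g) \<in> kernel G B eps"
    using g tau_closed tau_section unfolding kernel_def by (simp add: eps.hom_mult eps.hom_inv)
  then obtain c where "g \<otimes>\<^bsub>G\<^esub> inv\<^bsub>G\<^esub> tau (eps g) = iota c" and c: "c \<in> carrier (dsum I A)"
    unfolding image_iota[symmetric] by (rule imageE)
  then have "coord g = c"
    using c by (intro coord_eqI) simp_all
  with c show "coord g \<in> carrier (dsum I A)" "iota (coord g) = g \<otimes>\<^bsub>G\<^esub> inv\<^bsub>G\<^esub> tau (eps g)"
    using \<open>g \<otimes>\<^bsub>G\<^esub> inv\<^bsub>G\<^esub> tau (eps g) = iota c\<close> by simp_all
qed

lemma finite_supp_coord: "g \<in> carrier G \<Longrightarrow> finite (supp_ds I A (coord g))"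
  by (rule A.finite_supp_ds[OF coord_closed])

lemma coord_iota:
  assumes c: "c \<in> carrier (dsum I A)"
  shows "coord (iota c) = c"
proof (rule coord_eqI[OF c])
  have "iota c \<in> kernel G B eps"
    using c unfolding image_iota[symmetric] by (rule imageI)
  then have "eps (iota c) = \<one>\<^bsub>B\<^esub>"
    unfolding kernel_def by simp
  then show "iota c = iota c \<otimes>\<^bsub>G\<^esub> inv\<^bsub>G\<^esub> tau (eps (iota c))"
    using c by (simp add: tau_one)
qed

lemma iota_coord_mult:
  assumes x: "x \<in> carrier G" and z: "z \<in> carrier G"
  shows "iota (coord (x \<otimes>\<^bsub>G\<^esub> z))
    = (x \<otimes>\<^bsub>G\<^esub> iota (coord z) \<otimes>\<^bsub>G\<^esub> inv\<^bsub>G\<^esub> x) \<otimes>\<^bsub>G\<^esub> iota (coord x)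
      \<otimes>\<^bsub>G\<^esub> cocycle G B tau (eps x) (eps z)"
proof -
  have cancel: "inv\<^bsub>G\<^esub> a \<otimes>\<^bsub>G\<^esub> (a \<otimes>\<^bsub>G\<^esub> b) = b"
    if "a \<in> carrier G" "b \<in> carrier G" for a b
    using that by (simp flip: G.m_assoc)
  show ?thesis
    using x z tau_closed[of "eps x"] tau_closed[of "eps z"] tau_closed[of "eps x \<otimes>\<^bsub>B\<^esub> eps z"]
    by (simp add: iota_coord eps.hom_mult cocycle_def G.m_assoc cancel)
qed

lemma obtain_cocycle_preimage:
  assumes "a \<in> carrier B" "b \<in> carrier B"
  obtains \<alpha> where "\<alpha> \<in> carrier (dsum I A)" "iota \<alpha> = cocycle G B tau a b"
    "real (card (supp_ds I A \<alpha>)) \<le> K"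
proof -
  from cocycle_bounded[OF assms] obtain \<alpha> where "\<alpha> \<in> carrier (dsum I A)"
    and "iota \<alpha> = cocycle G B tau a b \<and> real (card (supp_ds I A \<alpha>)) \<le> K" ..
  then show thesis
    using that by simp
qed

lemma coord_mult_decomposition:
  assumes x: "x \<in> carrier G" and z: "z \<in> carrier G"
  obtains z' \<alpha> where "z' \<in> carrier (dsum I A)" "supp_ds I A z' = phi (eps x) ` supp_ds I A (coord z)"
    "\<alpha> \<in> carrier (dsum I A)" "real (card (supp_ds I A \<alpha>)) \<le> K"
    "coord (x \<otimes>\<^bsub>G\<^esub> z) = z' \<otimes>\<^bsub>dsum I A\<^esub> coord x \<otimes>\<^bsub>dsum I A\<^esub> \<alpha>"
proof -
  obtain z' where z': "z' \<in> carrier (dsum I A)" "x \<otimes>\<^bsub>G\<^esub> iota (coord z) \<otimes>\<^bsub>G\<^esub> inv\<^bsub>G\<^esub> x = iota z'"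
    "supp_ds I A z' = phi (eps x) ` supp_ds I A (coord z)"
    using conj_iota_supp[OF x coord_closed[OF z]] .
  obtain \<alpha> where \<alpha>: "\<alpha> \<in> carrier (dsum I A)" "iota \<alpha> = cocycle G B tau (eps x) (eps z)"
    "real (card (supp_ds I A \<alpha>)) \<le> K"
    using obtain_cocycle_preimage[OF eps.hom_closed[OF x] eps.hom_closed[OF z]] .
  have "iota (coord (x \<otimes>\<^bsub>G\<^esub> z)) = iota z' \<otimes>\<^bsub>G\<^esub> iota (coord x) \<otimes>\<^bsub>G\<^esub> iota \<alpha>"
    using iota_coord_mult[OF x z] z'(2) \<alpha>(2) by simp
  also have "\<dots> = iota (z' \<otimes>\<^bsub>dsum I A\<^esub> coord x \<otimes>\<^bsub>dsum I A\<^esub> \<alpha>)"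
    using z'(1) coord_closed[OF x] \<alpha>(1) by (simp add: iota.hom_mult del: mult_sum_group)
  finally have "coord (x \<otimes>\<^bsub>G\<^esub> z) = z' \<otimes>\<^bsub>dsum I A\<^esub> coord x \<otimes>\<^bsub>dsum I A\<^esub> \<alpha>"
    using inj_onD[OF inj_iota] coord_closed[OF G.m_closed[OF x z]] coord_closed[OF x] z'(1) \<alpha>(1)
    by (simp del: mult_sum_group)
  with z'(1,3) \<alpha>(1,3) show thesis
    by (rule that)
qed

lemma card_sym_diff_coord_mult_left:
  assumes x: "x \<in> carrier G" and z: "z \<in> carrier G"
  shows "real (card (sym_diff (supp_ds I A (coord (x \<otimes>\<^bsub>G\<^esub> z))) (phi (eps x) ` supp_ds I A (coord z))))
           \<le> real (card (supp_ds I A (coord x))) + K"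
proof -
  obtain z' \<alpha> where z': "z' \<in> carrier (dsum I A)" "supp_ds I A z' = phi (eps x) ` supp_ds I A (coord z)"
    and \<alpha>: "\<alpha> \<in> carrier (dsum I A)" "real (card (supp_ds I A \<alpha>)) \<le> K"
    and decomp: "coord (x \<otimes>\<^bsub>G\<^esub> z) = z' \<otimes>\<^bsub>dsum I A\<^esub> coord x \<otimes>\<^bsub>dsum I A\<^esub> \<alpha>"
    using coord_mult_decomposition[OF x z] .
  define r where "r = coord x \<otimes>\<^bsub>dsum I A\<^esub> \<alpha>"
  have r: "r \<in> carrier (dsum I A)"
    unfolding r_def using coord_closed[OF x] \<alpha>(1) by (rule iota.G.m_closed)
  have "coord (x \<otimes>\<^bsub>G\<^esub> z) = z' \<otimes>\<^bsub>dsum I A\<^esub> r"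
    unfolding decomp r_def using z'(1) coord_closed[OF x] \<alpha>(1) by (rule iota.G.m_assoc)
  then have "card (sym_diff (supp_ds I A (coord (x \<otimes>\<^bsub>G\<^esub> z))) (phi (eps x) ` supp_ds I A (coord z)))
      \<le> card (supp_ds I A r)"
    using A.sym_diff_supp_ds_mult_left[OF z'(1) r] z'(2) A.finite_supp_ds[OF r]
    by (simp add: card_mono del: mult_sum_group)
  also have "\<dots> \<le> card (supp_ds I A (coord x)) + card (supp_ds I A \<alpha>)"
    unfolding r_def by (rule A.card_supp_ds_mult[OF coord_closed[OF x] \<alpha>(1)])
  finally show ?thesis
    using \<alpha>(2) by linarith
qed

lemma card_sym_diff_coord_mult_right:
  assumes x: "x \<in> carrier G" and y: "y \<in> carrier G"
  shows "real (card (sym_diff (supp_ds I A (coord (x \<otimes>\<^bsub>G\<^esub> y))) (supp_ds I A (coord x))))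
           \<le> real (card (supp_ds I A (coord y))) + K"
proof -
  obtain y' \<alpha> where y': "y' \<in> carrier (dsum I A)" "supp_ds I A y' = phi (eps x) ` supp_ds I A (coord y)"
    and \<alpha>: "\<alpha> \<in> carrier (dsum I A)" "real (card (supp_ds I A \<alpha>)) \<le> K"
    and decomp: "coord (x \<otimes>\<^bsub>G\<^esub> y) = y' \<otimes>\<^bsub>dsum I A\<^esub> coord x \<otimes>\<^bsub>dsum I A\<^esub> \<alpha>"
    using coord_mult_decomposition[OF x y] .
  have card_y': "card (supp_ds I A y') = card (supp_ds I A (coord y))"
    unfolding y'(2) using x supp_ds_subset by (intro card_phi_image) simp_all
  have "card (sym_diff (supp_ds I A (coord (x \<otimes>\<^bsub>G\<^esub> y))) (supp_ds I A (coord x)))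
      \<le> card (supp_ds I A y' \<union> supp_ds I A \<alpha>)"
    unfolding decomp
    using A.sym_diff_supp_ds_mult_middle[OF y'(1) coord_closed[OF x] \<alpha>(1)]
      A.finite_supp_ds[OF y'(1)] A.finite_supp_ds[OF \<alpha>(1)]
    by (simp add: card_mono del: mult_sum_group)
  also have "\<dots> \<le> card (supp_ds I A y') + card (supp_ds I A \<alpha>)"
    by (rule card_Un_le)
  finally show ?thesis
    using \<alpha>(2) card_y' by linarith
qed

lemma card_sym_diff_coord_conj_mult:
  assumes x: "x \<in> carrier G" and z: "z \<in> carrier G" and y: "y \<in> carrier G"
  shows "real (card (sym_diff (supp_ds I A (coord (x \<otimes>\<^bsub>G\<^esub> z \<otimes>\<^bsub>G\<^esub> y)))
                               (phi (eps x) ` supp_ds I A (coord z))))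
           \<le> real (card (supp_ds I A (coord x))) + real (card (supp_ds I A (coord y))) + 2 * K"
proof -
  have xz: "x \<otimes>\<^bsub>G\<^esub> z \<in> carrier G"
    using x z by simp
  have "card (sym_diff (supp_ds I A (coord (x \<otimes>\<^bsub>G\<^esub> z \<otimes>\<^bsub>G\<^esub> y))) (phi (eps x) ` supp_ds I A (coord z)))
      \<le> card (sym_diff (supp_ds I A (coord (x \<otimes>\<^bsub>G\<^esub> z \<otimes>\<^bsub>G\<^esub> y))) (supp_ds I A (coord (x \<otimes>\<^bsub>G\<^esub> z))))
        + card (sym_diff (supp_ds I A (coord (x \<otimes>\<^bsub>G\<^esub> z))) (phi (eps x) ` supp_ds I A (coord z)))"
    using finite_supp_coord[OF G.m_closed[OF xz y]] finite_supp_coord[OF xz] finite_supp_coord[OF z]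
    by (intro card_sym_diff_triangle) simp_all
  then show ?thesis
    using card_sym_diff_coord_mult_right[OF xz y] card_sym_diff_coord_mult_left[OF x z] by linarith
qed

lemma indicator_coord_in_l2: "g \<in> carrier G \<Longrightarrow> indicator (supp_ds I A (coord g)) \<in> l2 I"
  using finite_supp_coord supp_ds_subset by (rule indicator_in_l2)

lemma l2norm_indicator_coord_iota:
  assumes c: "c \<in> carrier (dsum I A)"
  shows "(l2norm I (indicator (supp_ds I A (coord (iota c)))))\<^sup>2 = real (card (supp_ds I A c))"
  using l2norm_indicator[OF A.finite_supp_ds[OF c] supp_ds_subset] by (simp add: coord_iota[OF c])

lemma l2norm_indicator_coord_conj_mult_le:
  assumes x: "x \<in> carrier G" and z: "z \<in> carrier G" and y: "y \<in> carrier G"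
  shows "l2norm I (\<lambda>i. indicator (supp_ds I A (coord (x \<otimes>\<^bsub>G\<^esub> z \<otimes>\<^bsub>G\<^esub> y))) i
                      - perm_rep B I phi (eps x) (indicator (supp_ds I A (coord z))) i)
           \<le> sqrt (real (card (supp_ds I A (coord x))) + real (card (supp_ds I A (coord y))) + 2 * K)"
proof -
  have xzy: "x \<otimes>\<^bsub>G\<^esub> z \<otimes>\<^bsub>G\<^esub> y \<in> carrier G"
    using x y z by simp
  have "phi (eps x) ` supp_ds I A (coord z) \<subseteq> phi (eps x) ` I"
    by (rule image_mono[OF supp_ds_subset])
  then have "phi (eps x) ` supp_ds I A (coord z) \<subseteq> I"
    using action.surj_prop[OF eps.hom_closed[OF x]] by simp
  then have "l2norm I (\<lambda>i. indicator (supp_ds I A (coord (x \<otimes>\<^bsub>G\<^esub> z \<otimes>\<^bsub>G\<^esub> y))) i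
                      - perm_rep B I phi (eps x) (indicator (supp_ds I A (coord z))) i)
      = sqrt (real (card (sym_diff (supp_ds I A (coord (x \<otimes>\<^bsub>G\<^esub> z \<otimes>\<^bsub>G\<^esub> y)))
                                   (phi (eps x) ` supp_ds I A (coord z)))))"
    using x finite_supp_coord[OF xzy] finite_supp_coord[OF z]
    by (simp add: action.perm_rep_indicator supp_ds_subset l2norm_indicator_diff)
  then show ?thesis
    using card_sym_diff_coord_conj_mult[OF x z y] by simp
qed


theorem quasi_equivariant_indicator_map:
  "\<exists>q :: 'g \<Rightarrow> 'i \<Rightarrow> real.
     (\<forall>z\<in>carrier G. q z \<in> l2 I) \<and>
     (\<forall>x\<in>carrier G. \<forall>y\<in>carrier G. \<exists>M. \<forall>z\<in>carrier G.
         l2norm I (\<lambda>i. q (x \<otimes>\<^bsub>G\<^esub> z \<otimes>\<^bsub>G\<^esub> y) i - perm_rep B I phi (eps x) (q z) i) \<le> M) \<and>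
     (\<forall>c\<in>carrier (dsum I A). (l2norm I (q (iota c)))\<^sup>2 = real (card (supp_ds I A c)))"
proof (intro exI[of _ "\<lambda>g. indicator (supp_ds I A (coord g))"] conjI ballI exI)
  show "indicator (supp_ds I A (coord z)) \<in> l2 I" if "z \<in> carrier G" for z
    using that by (rule indicator_coord_in_l2)
  show "(l2norm I (indicator (supp_ds I A (coord (iota c)))))\<^sup>2 = real (card (supp_ds I A c))"
    if "c \<in> carrier (dsum I A)" for c
    using that by (rule l2norm_indicator_coord_iota)
  show "l2norm I (\<lambda>i. indicator (supp_ds I A (coord (x \<otimes>\<^bsub>G\<^esub> z \<otimes>\<^bsub>G\<^esub> y))) i
          - perm_rep B I phi (eps x) (indicator (supp_ds I A (coord z))) i)
        \<le> sqrt (real (card (supp_ds I A (coord x))) + real (card (supp_ds I A (coord y))) + 2 * K)"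
    if "x \<in> carrier G" "y \<in> carrier G" "z \<in> carrier G" for x y z
    using that by (intro l2norm_indicator_coord_conj_mult_le)
qed
end

text \<open>Normalizing changes a cocycle value at most by the factor \<open>alpha(1,1) = sig 1\<close>, whence
  the bound \<open>2 * C\<close>.\<close>

definition normalized_section ::
  "('b, 'bc) monoid_scheme \<Rightarrow> ('g, 'gc) monoid_scheme \<Rightarrow> ('b \<Rightarrow> 'g) \<Rightarrow> 'b \<Rightarrow> 'g" where
  "normalized_section B G sig b = (if b = \<one>\<^bsub>B\<^esub> then \<one>\<^bsub>G\<^esub> else sig b)"

lemma (in wr_extension) cocycle_normalized_section_cases:
  assumes sig: "sig \<in> carrier B \<rightarrow> carrier G" and a: "a \<in> carrier B" and b: "b \<in> carrier B"
  obtains "cocycle G B (normalized_section B G sig) a b = \<one>\<^bsub>G\<^esub>"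
    | "cocycle G B (normalized_section B G sig) a b = cocycle G B sig a b"
    | "cocycle G B (normalized_section B G sig) a b = cocycle G B sig a b \<otimes>\<^bsub>G\<^esub> cocycle G B sig \<one>\<^bsub>B\<^esub> \<one>\<^bsub>B\<^esub>"
proof -
  have sig_closed: "sig b \<in> carrier G" if "b \<in> carrier B" for b
    using sig that by (rule funcset_mem)
  consider "a = \<one>\<^bsub>B\<^esub> \<or> b = \<one>\<^bsub>B\<^esub>" | "a \<noteq> \<one>\<^bsub>B\<^esub>" "b \<noteq> \<one>\<^bsub>B\<^esub>" "a \<otimes>\<^bsub>B\<^esub> b \<noteq> \<one>\<^bsub>B\<^esub>"
    | "a \<noteq> \<one>\<^bsub>B\<^esub>" "b \<noteq> \<one>\<^bsub>B\<^esub>" "a \<otimes>\<^bsub>B\<^esub> b = \<one>\<^bsub>B\<^esub>"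
    by auto
  then show thesis
  proof cases
    case 1
    then show thesis
      using a b sig_closed that(1) unfolding cocycle_def normalized_section_def by auto
  next
    case 2
    then show thesis
      using that(2) unfolding cocycle_def normalized_section_def by simp
  next
    case 3
    then show thesis
      using a b sig_closed that(3) unfolding cocycle_def normalized_section_def by (simp add: G.m_assoc)
  qed
qed

lemma (in wr_extension) wr_normalized_section_normalized_section:
  fixes sig :: "'b \<Rightarrow> 'g" and C :: real
  assumes sig_carrier: "sig \<in> carrier B \<rightarrow> carrier G"
    and sig_section: "\<forall>b\<in>carrier B. eps (sig b) = b"
    and bounded: "\<forall>x\<in>carrier B. \<forall>y\<in>carrier B. \<exists>c\<in>carrier (dsum I A).
                    iota c = cocycle G B sig x y \<and> real (card (supp_ds I A c)) \<le> C"
  shows "wr_normalized_section G A B I phi iota eps (normalized_section B G sig) (2 * C)"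
proof (intro wr_normalized_section.intro wr_normalized_section_axioms.intro)
  have preimage: "\<exists>c\<in>carrier (dsum I A). iota c = cocycle G B sig a b \<and> real (card (supp_ds I A c)) \<le> C"
    if "a \<in> carrier B" "b \<in> carrier B" for a b
    using bounded that by simp
  from preimage[OF B.one_closed B.one_closed] obtain c0 where c0: "c0 \<in> carrier (dsum I A)"
    and c0_eq: "iota c0 = cocycle G B sig \<one>\<^bsub>B\<^esub> \<one>\<^bsub>B\<^esub> \<and> real (card (supp_ds I A c0)) \<le> C" ..
  show "\<exists>c\<in>carrier (dsum I A).
          iota c = cocycle G B (normalized_section B G sig) a b \<and> real (card (supp_ds I A c)) \<le> 2 * C"
    if a: "a \<in> carrier B" and b: "b \<in> carrier B" for a b
  proof -
    from preimage[OF a b] obtain c1 where c1: "c1 \<in> carrier (dsum I A)"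
      and c1_eq: "iota c1 = cocycle G B sig a b \<and> real (card (supp_ds I A c1)) \<le> C" ..
    have C_nonneg: "0 \<le> C"
      using c0_eq by linarith
    show ?thesis
    proof (cases rule: cocycle_normalized_section_cases[OF sig_carrier a b])
      case 1
      moreover have "supp_ds I A \<one>\<^bsub>dsum I A\<^esub> = {}"
        using A.supp_ds_eq_empty_iff[OF iota.G.one_closed] by simp
      ultimately show ?thesis
        using iota.G.one_closed C_nonneg
        by (intro bexI[of _ "\<one>\<^bsub>dsum I A\<^esub>"]) (simp_all del: one_sum_group)
    next
      case 2
      then show ?thesis
        using c1 c1_eq C_nonneg by (intro bexI[of _ c1]) simp_all
    next
      case 3
      moreover have "iota (c1 \<otimes>\<^bsub>dsum I A\<^esub> c0) = cocycle G B sig a b \<otimes>\<^bsub>G\<^esub> cocycle G B sig \<one>\<^bsub>B\<^esub> \<one>\<^bsub>B\<^esub>"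
        using c1 c0 c1_eq c0_eq by (simp add: iota.hom_mult del: mult_sum_group)
      moreover have "card (supp_ds I A (c1 \<otimes>\<^bsub>dsum I A\<^esub> c0)) \<le> card (supp_ds I A c1) + card (supp_ds I A c0)"
        by (rule A.card_supp_ds_mult[OF c1 c0])
      ultimately show ?thesis
        using iota.G.m_closed[OF c1 c0] c1_eq c0_eq
        by (intro bexI[of _ "c1 \<otimes>\<^bsub>dsum I A\<^esub> c0"]) (simp_all del: mult_sum_group)
    qed
  qed
qed (use wr_extension_axioms sig_carrier sig_section in
      \<open>auto simp: normalized_section_def intro: funcset_mem\<close>)

theorem theorem5p1:
  fixes G :: "('g, 'gc) monoid_scheme" and A :: "('a, 'ac) monoid_scheme"
    and B :: "('b, 'bc) monoid_scheme" and I :: "'i set"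
    and phi :: "'b \<Rightarrow> 'i \<Rightarrow> 'i" and iota :: "('i \<Rightarrow> 'a) \<Rightarrow> 'g" and eps :: "'g \<Rightarrow> 'b"
    and sig :: "'b \<Rightarrow> 'g" and C :: real
  assumes wr: "WR G A B I phi iota eps"
    and sig_carrier: "sig \<in> carrier B \<rightarrow> carrier G"
    and sig_section: "\<forall>b\<in>carrier B. eps (sig b) = b"
    and C_pos: "C > 0"
    and bounded: "\<forall>x\<in>carrier B. \<forall>y\<in>carrier B. \<exists>c\<in>carrier (dsum I A).
                    iota c = cocycle G B sig x y \<and> real (card (supp_ds I A c)) \<le> C"
  shows "\<exists>q :: 'g \<Rightarrow> 'i \<Rightarrow> real.
           (\<forall>z\<in>carrier G. q z \<in> l2 I) \<and>
           (\<forall>x\<in>carrier G. \<forall>y\<in>carrier G. \<exists>M. \<forall>z\<in>carrier G.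
               l2norm I (\<lambda>i. q (x \<otimes>\<^bsub>G\<^esub> z \<otimes>\<^bsub>G\<^esub> y) i - perm_rep B I phi (eps x) (q z) i) \<le> M) \<and>
           (\<forall>c\<in>carrier (dsum I A). (l2norm I (q (iota c)))\<^sup>2 = real (card (supp_ds I A c)))"
proof -
  have extension: "wr_extension G A B I phi iota eps"
    using wr by (rule wr_extension.intro)
  have "wr_normalized_section G A B I phi iota eps (normalized_section B G sig) (2 * C)"
    by (rule wr_extension.wr_normalized_section_normalized_section[OF extension sig_carrier sig_section bounded])
  then show ?thesis
    by (rule wr_normalized_section.quasi_equivariant_indicator_map)
qed

end
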